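(* Let $p,q,r\in(0,1/36)$, $h=8/15$, $a=3/15$, and let $\mathcal S_{pqr}=\{S_1,\dots,S_6\}$ be given by $S_1(x)=px$, $S_2(x)=a+rx$, $S_3(x)=h-qx$, $S_4(x)=h-r+rx$, $S_5(x)=1-a-rx$, $S_6(x)=1-r+rx$. If $\frac{\log p}{\log r}\notin\mathbb{Q}$, then $\mathcal S_{pqr}$ does not have the weak separation property, for every such $q$.
   Context: For a system $\mathcal S=\{S_1,\dots,S_m\}$ of similarities, let $F=\{S_{j_1}\circ\cdots\circ S_{j_n}: n\ge1, j_k\in\{1,\dots,m\}\}$ be the generated semigroup and $\mathcal F=\{g^{-1}\circ f: f,g\in F\}$ the associated family of similarities. $\mathcal S$ has the weak separation property (WSP) if $\mathrm{Id}$ is not a limit point of $\mathcal F\setminus\{\mathrm{Id}\}$, i.e. $\mathrm{Id}\notin\overline{\mathcal F\setminus\{\mathrm{Id}\}}$ (for similarities $x\mapsto \lambda x+b$ of $\mathbb{R}$, convergence means convergence of the coefficients $\lambda,b$). *)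

theory Defs
  imports "HOL-Analysis.Analysis"
begin

text \<open>A similarity x \<mapsto> l*x + b of the real line is represented by its coefficient
  pair (l, b) :: real \<times> real (with l \<noteq> 0).  Convergence of similarities is
  convergence of the coefficients, i.e. the product topology on real \<times> real.\<close>

type_synonym sim = "real \<times> real"

definition sim_app :: "sim \<Rightarrow> real \<Rightarrow> real" where
  "sim_app s x = fst s * x + snd s"

definition sim_comp :: "sim \<Rightarrow> sim \<Rightarrow> sim" where
  "sim_comp f g = (fst f * fst g, fst f * snd g + snd f)"

definition sim_inv :: "sim \<Rightarrow> sim" where
  "sim_inv f = (1 / fst f, - snd f / fst f)"

definition sim_id :: sim where
  "sim_id = (1, 0)"

inductive_set gen_semigroup :: "sim set \<Rightarrow> sim set" for G :: "sim set" where
  gen: "s \<in> G \<Longrightarrow> s \<in> gen_semigroup G"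
| comp: "s \<in> G \<Longrightarrow> f \<in> gen_semigroup G \<Longrightarrow> sim_comp s f \<in> gen_semigroup G"

definition assoc_family :: "sim set \<Rightarrow> sim set" where
  "assoc_family G = {sim_comp (sim_inv g) f | f g. f \<in> gen_semigroup G \<and> g \<in> gen_semigroup G}"

definition WSP :: "sim set \<Rightarrow> bool" where
  "WSP G \<longleftrightarrow> sim_id \<notin> closure (assoc_family G - {sim_id})"

end

theory Submission
  imports Defs "HOL-Analysis.Kronecker_Approximation_Theorem"
begin

text \<open>The words \<open>f = S\<^sub>3 S\<^sub>1\<^sup>m S\<^sub>2\<close> and
  \<open>g = S\<^sub>4 S\<^sub>6\<^sup>n\<^sup>-\<^sup>1 S\<^sub>5\<close> are
  \<open>x \<mapsto> h - c a - c r x\<close> with \<open>c = q p\<^sup>m\<close> and \<open>c = r\<^sup>n\<close> respectively,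
  so \<open>g\<inverse> f\<close> is the similarity with ratio \<open>\<rho> = q p\<^sup>m / r\<^sup>n\<close>
  and offset \<open>a (\<rho> - 1) / r\<close>, which tends to the identity as \<open>\<rho> \<rightarrow> 1\<close>.
  Since \<open>log\<^sub>r \<rho> = log\<^sub>r q + m log\<^sub>r p - n\<close> with \<open>log\<^sub>r p\<close> irrational,
  Kronecker's theorem makes \<open>\<rho>\<close> approach 1 with \<open>\<rho> \<noteq> 1\<close>.\<close>

lemma homothety_iterate_in_gen_semigroup:
  assumes "(t, (1 - t) * z) \<in> G" and "(l, b) \<in> gen_semigroup G"
  shows "(t ^ n * l, t ^ n * b + (1 - t ^ n) * z) \<in> gen_semigroup G"
proof (induction n)
  case 0
  show ?case using assms(2) by simp
next
  case (Suc n)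
  have "sim_comp (t, (1 - t) * z) (t ^ n * l, t ^ n * b + (1 - t ^ n) * z) \<in> gen_semigroup G"
    using assms(1) Suc by (rule gen_semigroup.comp)
  then show ?case by (simp add: sim_comp_def algebra_simps)
qed

lemma sim_comp_sim_inv_Pair:
  assumes "l \<noteq> 0"
  shows "sim_comp (sim_inv (l, b)) (l', b') = (l' / l, (b' - b) / l)"
  using assms by (simp add: sim_comp_def sim_inv_def field_simps)

lemma dist_sim_id_le:
  fixes \<rho> \<beta> :: real
  shows "dist (\<rho>, \<beta> * (\<rho> - 1)) sim_id \<le> (1 + \<bar>\<beta>\<bar>) * \<bar>\<rho> - 1\<bar>"
proof -
  have "dist (\<rho>, \<beta> * (\<rho> - 1)) sim_id = sqrt ((\<rho> - 1)\<^sup>2 + (\<beta> * (\<rho> - 1))\<^sup>2)"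
    by (simp add: sim_id_def dist_Pair_Pair dist_real_def)
  also have "\<dots> \<le> \<bar>\<rho> - 1\<bar> + \<bar>\<beta> * (\<rho> - 1)\<bar>"
    by (rule sqrt_sum_squares_le_sum_abs)
  also have "\<dots> = (1 + \<bar>\<beta>\<bar>) * \<bar>\<rho> - 1\<bar>"
    by (simp only: abs_mult distrib_right mult_1)
  finally show ?thesis .
qed

text \<open>The bound \<open>y \<le> 0\<close> is what lets \<open>n\<close> be a natural number.\<close>
lemma irrational_multiples_dense_below_zero:
  fixes \<theta> x y :: real
  assumes "\<theta> \<notin> \<rat>" "\<theta> > 0" "x < y" "y \<le> 0"
  obtains m n :: nat where "x < m * \<theta> - n" "m * \<theta> - n < y"
proof -
  define t where "t = (x + y) / 2"
  obtain k :: nat where "\<bar>frac (k * \<theta>) - frac t\<bar> < (y - x) / 2"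
    using Kronecker_approx_1_explicit[OF assms(1), of "frac t" "(y - x) / 2"] assms(3)
    by (auto simp: frac_lt_1 less_imp_le)
  moreover define n where "n = nat \<lfloor>k * \<theta>\<rfloor> + nat (- \<lfloor>t\<rfloor>)"
  have "k * \<theta> - n - t = frac (k * \<theta>) - frac t"
    using assms(2,3,4) by (simp add: n_def frac_def t_def)
  ultimately have "\<bar>(k * \<theta> - n) - t\<bar> < (y - x) / 2"
    by simp
  then show thesis
    using that[of k n] unfolding t_def by (simp add: abs_less_iff field_simps)
qed

lemma ratios_accumulate_at_one:
  fixes p q r \<epsilon> :: real
  assumes "p \<in> {0<..<1}" "q \<in> {0<..<1}" "r \<in> {0<..<1}" "ln p / ln r \<notin> \<rat>" "\<epsilon> > 0"
  obtains m n :: nat where "n > 0" "1 - \<epsilon> < q * p ^ m / r ^ n" "q * p ^ m / r ^ n < 1"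
proof -
  define \<theta> where "\<theta> = ln p / ln r"
  define s where "s = ln q / ln r"
  define L where "L = - ln r"
  have "\<theta> > 0" "s > 0" "L > 0"
    using assms(1-3) by (auto simp: \<theta>_def s_def L_def divide_neg_neg)
  then obtain m n :: nat where mn: "- s < m * \<theta> - n" "m * \<theta> - n < - s + min s (\<epsilon> / L)"
    using irrational_multiples_dense_below_zero[of \<theta> "- s" "- s + min s (\<epsilon> / L)"] assms(4,5)
    by (auto simp: \<theta>_def)
  define \<delta> where "\<delta> = s + m * \<theta> - n"
  have "\<delta> > 0" "\<delta> < \<epsilon> / L"
    using mn by (auto simp: \<delta>_def)
  then have "L * \<delta> < \<epsilon>"
    using \<open>L > 0\<close> by (simp add: pos_less_divide_eq mult.commute)
  have "real n > m * \<theta>"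
    using mn(2) min.cobounded1[of s "\<epsilon> / L"] by linarith
  moreover have "m * \<theta> \<ge> 0"
    using \<open>\<theta> > 0\<close> by simp
  ultimately have "n > 0"
    by linarith
  define \<rho> where "\<rho> = q * p ^ m / r ^ n"
  have "\<rho> > 0"
    using assms(1-3) by (simp add: \<rho>_def)
  have ln_\<rho>: "ln \<rho> = - L * \<delta>"
    using assms(1-3) by (simp add: \<rho>_def \<delta>_def \<theta>_def s_def L_def ln_div ln_mult ln_realpow field_simps)
  have "ln \<rho> < 0"
    using \<open>\<delta> > 0\<close> \<open>L > 0\<close> by (simp add: ln_\<rho>)
  then have "\<rho> < 1"
    using \<open>\<rho> > 0\<close> by simp
  have "1 - \<rho> \<le> - ln \<rho>"
    using ln_le_minus_one[OF \<open>\<rho> > 0\<close>] by simp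
  also have "\<dots> < \<epsilon>"
    using \<open>L * \<delta> < \<epsilon>\<close> by (simp add: ln_\<rho>)
  finally have "1 - \<epsilon> < \<rho>"
    by simp
  with that \<open>n > 0\<close> \<open>\<rho> < 1\<close> show thesis
    unfolding \<rho>_def by blast
qed

lemma ratio_in_assoc_family:
  fixes p q r a h :: real
  assumes "{(p, 0), (r, a), (-q, h), (r, h - r), (-r, 1 - a), (r, 1 - r)} \<subseteq> G"
    and "r \<noteq> 0" "n > 0"
  shows "(q * p ^ m / r ^ n, a / r * (q * p ^ m / r ^ n - 1)) \<in> assoc_family G"
proof -
  obtain k where n: "n = Suc k"
    using \<open>n > 0\<close> gr0_implies_Suc by blast
  have "(p ^ m * r, p ^ m * a) \<in> gen_semigroup G"
    using homothety_iterate_in_gen_semigroup[of p 0 G r a m] assms(1)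
    by (simp add: gen_semigroup.gen)
  from gen_semigroup.comp[OF _ this, of "(-q, h)"]
  have f: "(- (q * p ^ m) * r, h - q * p ^ m * a) \<in> gen_semigroup G"
    using assms(1) by (simp add: sim_comp_def algebra_simps)
  have "(r ^ k * - r, r ^ k * (1 - a) + (1 - r ^ k) * 1) \<in> gen_semigroup G"
    using homothety_iterate_in_gen_semigroup[of r 1 G "-r" "1 - a" k] assms(1)
    by (simp add: gen_semigroup.gen)
  from gen_semigroup.comp[OF _ this, of "(r, h - r)"]
  have g: "(- (r ^ n) * r, h - r ^ n * a) \<in> gen_semigroup G"
    using assms(1) by (simp add: n sim_comp_def algebra_simps)
  have "sim_comp (sim_inv (- (r ^ n) * r, h - r ^ n * a)) (- (q * p ^ m) * r, h - q * p ^ m * a)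
      = (q * p ^ m / r ^ n, a / r * (q * p ^ m / r ^ n - 1))"
    using \<open>r \<noteq> 0\<close> by (simp add: sim_comp_sim_inv_Pair field_simps)
  then show ?thesis
    using f g unfolding assoc_family_def by force
qed

lemma not_WSP_if_ratios_accumulate_at_one:
  fixes p q r a h :: real
  assumes "{(p, 0), (r, a), (-q, h), (r, h - r), (-r, 1 - a), (r, 1 - r)} \<subseteq> G" "r \<noteq> 0"
    and "\<And>\<epsilon>. \<epsilon> > 0 \<Longrightarrow> \<exists>m n :: nat. n > 0 \<and> 1 - \<epsilon> < q * p ^ m / r ^ n \<and> q * p ^ m / r ^ n < 1"
  shows "\<not> WSP G"
proof -
  have "sim_id \<in> closure (assoc_family G - {sim_id})"
    unfolding closure_approachable
  proof (intro allI impI)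
    fix e :: real
    assume "e > 0"
    define \<beta> where "\<beta> = a / r"
    obtain m n :: nat where "n > 0"
      and bounds: "1 - e / (1 + \<bar>\<beta>\<bar>) < q * p ^ m / r ^ n" "q * p ^ m / r ^ n < 1"
      using assms(3)[of "e / (1 + \<bar>\<beta>\<bar>)"] \<open>e > 0\<close> by auto
    define \<rho> where "\<rho> = q * p ^ m / r ^ n"
    note bounds = bounds[folded \<rho>_def]
    have "(\<rho>, \<beta> * (\<rho> - 1)) \<in> assoc_family G"
      using ratio_in_assoc_family[OF assms(1,2) \<open>n > 0\<close>] by (simp add: \<rho>_def \<beta>_def)
    moreover have "(\<rho>, \<beta> * (\<rho> - 1)) \<noteq> sim_id"
      using bounds(2) by (simp add: sim_id_def)
    moreover have "(1 + \<bar>\<beta>\<bar>) * \<bar>\<rho> - 1\<bar> < e"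
      using bounds by (simp add: field_simps add_pos_nonneg)
    then have "dist (\<rho>, \<beta> * (\<rho> - 1)) sim_id < e"
      using dist_sim_id_le[of \<rho> \<beta>] by simp
    ultimately show "\<exists>y \<in> assoc_family G - {sim_id}. dist y sim_id < e"
      by blast
  qed
  then show ?thesis
    unfolding WSP_def by simp
qed

theorem lemma1:
  fixes p q r :: real
  assumes "p \<in> {0<..<1/36}" and "q \<in> {0<..<1/36}" and "r \<in> {0<..<1/36}"
    and "ln p / ln r \<notin> \<rat>"
  shows "\<not> WSP {(p, 0), (r, 3/15), (-q, 8/15), (r, 8/15 - r), (-r, 1 - 3/15), (r, 1 - r)}"
proof (rule not_WSP_if_ratios_accumulate_at_one[where a = "3/15" and h = "8/15"])
  have "p \<in> {0<..<1}" "q \<in> {0<..<1}" "r \<in> {0<..<1}"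
    using assms(1-3) by auto
  then show "\<exists>m n :: nat. n > 0 \<and> 1 - \<epsilon> < q * p ^ m / r ^ n \<and> q * p ^ m / r ^ n < 1"
    if "\<epsilon> > 0" for \<epsilon>
    using ratios_accumulate_at_one[of p q r \<epsilon>] assms(4) that by metis
  show "r \<noteq> 0"
    using assms(3) by simp
qed simp

end
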